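(* Let $1\le p\le\infty$ and let $A,B\in\mathcal{B}_F$ with $L_a,L_b>0$. Then $$d_p\big(\psi(A),\psi(B)\big)\le\frac{4\,n_{\max}^{1-\frac1p}\,d_p(A,B)}{L_{\max}}=2r_p(A,B).$$
   Context: A persistence barcode is a finite multiset of intervals $[x,y]$, $x\le y$; $\mathcal{B}_F$ is the set of barcodes all of whose intervals have finite endpoints. For $A=\{[x_i^a,y_i^a]\}_{i=1}^{n_a}$, $\ell_i^a=y_i^a-x_i^a$, $L_a=\sum_i\ell_i^a$; similarly for $B$; $n_{\max}=\max\{n_a,n_b\}$, $L_{\max}=\max\{L_a,L_b\}$. The projection $\psi$ sends $A$ to $\psi(A)=\{[0,\ell_i^a/L_a]\}_{i=1}^{n_a}$. $p$-th Wasserstein distance: pad the smaller barcode with zero-length intervals $[t,t]$ until both have $n_{\max}$ intervals; $d_p(A,B)=\big(\min_\gamma\sum_i\max\{|x_i^a-x^b_{\gamma(i)}|^p,|y_i^a-y^b_{\gamma(i)}|^p\}\big)^{1/p}$ for $p<\infty$, $d_\infty(A,B)=\min_\gamma\max_i\max\{|x_i^a-x^b_{\gamma(i)}|,|y_i^a-y^b_{\gamma(i)}|\}$, minima over bijections $\gamma$ (and paddings). Relative error $r_p(A,B)=2n_{\max}^{1-1/p}d_p(A,B)/L_{\max}$, with $n_{\max}^{1-1/\infty}=n_{\max}$. *)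

theory Defs
  imports Complex_Main "HOL-Library.Multiset" "HOL-Library.Extended_Real"
begin

text \<open>A barcode is a finite multiset of intervals [x,y], represented as pairs (x,y).
  Finite endpoints are automatic for reals; x \<le> y is the validity condition.\<close>
type_synonym barcode = "(real \<times> real) multiset"

definition in_BF :: "barcode \<Rightarrow> bool" where
  "in_BF A \<longleftrightarrow> (\<forall>q\<in>#A. fst q \<le> snd q)"

definition total_length :: "barcode \<Rightarrow> real" where
  "total_length A = sum_mset (image_mset (\<lambda>q. snd q - fst q) A)"

definition n_max :: "barcode \<Rightarrow> barcode \<Rightarrow> nat" where
  "n_max A B = max (size A) (size B)"

definition L_max :: "barcode \<Rightarrow> barcode \<Rightarrow> real" where
  "L_max A B = max (total_length A) (total_length B)"

definition psi :: "barcode \<Rightarrow> barcode" where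
  "psi A = image_mset (\<lambda>q. (0, (snd q - fst q) / total_length A)) A"

definition icost :: "real \<times> real \<Rightarrow> real \<times> real \<Rightarrow> real" where
  "icost a b = max \<bar>fst a - fst b\<bar> \<bar>snd a - snd b\<bar>"

text \<open>Cost of the matching i \<mapsto> i between two equal-length lists
  (any bijection is realised by reordering the lists).\<close>
definition match_cost :: "ereal \<Rightarrow> (real \<times> real) list \<Rightarrow> (real \<times> real) list \<Rightarrow> real" where
  "match_cost p xs ys =
     (if p = \<infinity> then Max (insert 0 {icost (xs ! i) (ys ! i) | i. i < length xs})
      else (\<Sum>i<length xs. icost (xs ! i) (ys ! i) powr real_of_ereal p) powr (1 / real_of_ereal p))"

definition padded_enum :: "nat \<Rightarrow> barcode \<Rightarrow> (real \<times> real) list \<Rightarrow> bool" where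
  "padded_enum n A xs \<longleftrightarrow> length xs = n \<and>
     (\<exists>P. mset xs = A + P \<and> (\<forall>q\<in>#P. fst q = snd q))"

definition wdist :: "ereal \<Rightarrow> barcode \<Rightarrow> barcode \<Rightarrow> real" where
  "wdist p A B = Inf {match_cost p xs ys | xs ys.
      padded_enum (n_max A B) A xs \<and> padded_enum (n_max A B) B ys}"

definition nexp :: "ereal \<Rightarrow> nat \<Rightarrow> real" where
  "nexp p n = (if p = \<infinity> then real n else real n powr (1 - 1 / real_of_ereal p))"

definition rel_err :: "ereal \<Rightarrow> barcode \<Rightarrow> barcode \<Rightarrow> real" where
  "rel_err p A B = 2 * nexp p (n_max A B) * wdist p A B / L_max A B"

end

theory Submission
  imports Defs "HOL-Analysis.Analysis"
begin

text \<open>Match the intervals of two padded enumerations of \<open>A\<close> and \<open>B\<close> index by index, let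
  \<open>u\<^sub>i, v\<^sub>i\<close> be their lengths, \<open>U = L\<^sub>a\<close>, \<open>V = L\<^sub>b\<close> the sums and \<open>L = max U V\<close>.
  If \<open>V \<le> U\<close>, then \<open>u\<^sub>i/U - v\<^sub>i/V = ((u\<^sub>i - v\<^sub>i) + (v\<^sub>i/V)(V - U))/U\<close>, and
  \<open>|V - U| \<le> D = \<Sum>\<^sub>j |u\<^sub>j - v\<^sub>j|\<close>; so the normalised lengths differ by at most
  \<open>(|u\<^sub>i - v\<^sub>i| + D w\<^sub>i)/L\<close> for a probability vector \<open>w\<close>. Convexity of \<open>t\<^sup>p\<close> bounds the
  \<open>p\<close>-norm of \<open>|u - v| + D w\<close> by \<open>2 n\<^bsup>1-1/p\<^esup> \<parallel>u - v\<parallel>\<^sub>p\<close>, and \<open>|u\<^sub>i - v\<^sub>i|\<close> is at most twice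
  the matching cost of the \<open>i\<close>-th pair. Since \<open>\<psi>\<close> carries padded enumerations to padded
  enumerations, the bound passes to the infima defining the Wasserstein distances.\<close>

lemma abs_divide_diff_divide_le:
  fixes u v U V D :: real
  assumes "0 < V" "V \<le> U" "0 \<le> v" "\<bar>U - V\<bar> \<le> D"
  shows "\<bar>u / U - v / V\<bar> \<le> (\<bar>u - v\<bar> + D * (v / V)) / U"
proof -
  have U: "0 < U" using assms by linarith
  have "u / U - v / V = (u - v) / U + (v / V) * (V - U) / U"
    using assms U by (simp add: field_simps)
  also have "\<bar>\<dots>\<bar> \<le> \<bar>u - v\<bar> / U + (v / V) * \<bar>V - U\<bar> / U"
    using abs_triangle_ineq[of "(u - v) / U" "(v / V) * (V - U) / U"] assms U
    by (simp add: abs_mult)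
  also have "\<dots> \<le> \<bar>u - v\<bar> / U + (v / V) * D / U"
    using assms U by (intro add_left_mono divide_right_mono mult_left_mono) (auto simp: abs_minus_commute)
  finally show ?thesis by (simp add: add_divide_distrib mult.commute)
qed

lemma powr_sum_le_card_sum_powr:
  fixes c :: "'i \<Rightarrow> real"
  assumes q: "1 \<le> q" and fin: "finite I" and nonneg: "\<And>i. i \<in> I \<Longrightarrow> 0 \<le> c i"
  shows "(\<Sum>i\<in>I. c i) powr q \<le> real (card I) powr (q - 1) * (\<Sum>i\<in>I. c i powr q)"
proof -
  define J where "J = {i\<in>I. c i > 0}"
  have JI: "J \<subseteq> I" and finJ: "finite J" using fin by (auto simp: J_def)
  have sum_J: "(\<Sum>i\<in>I. c i) = (\<Sum>i\<in>J. c i)"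
    by (rule sum.mono_neutral_right[OF fin JI]) (use nonneg in \<open>force simp: J_def\<close>)
  have sum_powr_J: "(\<Sum>i\<in>I. c i powr q) = (\<Sum>i\<in>J. c i powr q)"
    by (rule sum.mono_neutral_right[OF fin JI]) (use nonneg q in \<open>force simp: J_def\<close>)
  show ?thesis
  proof (cases "J = {}")
    case True
    then show ?thesis using sum_J q by (simp add: sum_nonneg)
  next
    case False
    define m where "m = real (card J)"
    have m: "m > 0" using False finJ by (simp add: m_def card_gt_0_iff)
    have "(\<Sum>i\<in>J. (1/m) *\<^sub>R c i) powr q \<le> (\<Sum>i\<in>J. (1/m) * c i powr q)"
      by (rule convex_on_sum[OF finJ False powr_convex[OF q]])
         (use m in \<open>auto simp: J_def m_def\<close>)
    then have "((\<Sum>i\<in>J. c i) / m) powr q \<le> (\<Sum>i\<in>J. c i powr q) / m"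
      by (simp add: sum_divide_distrib)
    then have "(\<Sum>i\<in>J. c i) powr q / m powr q \<le> (\<Sum>i\<in>J. c i powr q) / m"
      using m by (simp add: powr_divide sum_nonneg J_def)
    then have "(\<Sum>i\<in>J. c i) powr q \<le> m powr (q - 1) * (\<Sum>i\<in>J. c i powr q)"
      using m by (simp add: divide_le_eq powr_diff field_simps)
    also have "\<dots> \<le> real (card I) powr (q - 1) * (\<Sum>i\<in>J. c i powr q)"
      using q m card_mono[OF fin JI] by (intro mult_right_mono powr_mono2) (auto simp: m_def sum_nonneg)
    finally show ?thesis using sum_J sum_powr_J by simp
  qed
qed

lemma powr_add_le_two_powr:
  fixes x y q :: real
  assumes "1 \<le> q" "0 \<le> x" "0 \<le> y"
  shows "(x + y) powr q \<le> 2 powr (q - 1) * (x powr q + y powr q)"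
  using powr_sum_le_card_sum_powr[OF assms(1), of "{0::nat, 1}" "\<lambda>i. if i = 0 then x else y"] assms
  by simp

lemma sum_powr_add_sum_weighted_le:
  fixes f w :: "nat \<Rightarrow> real"
  assumes q: "1 \<le> q" and f: "\<And>i. i < n \<Longrightarrow> 0 \<le> f i"
    and w: "\<And>i. i < n \<Longrightarrow> 0 \<le> w i" and sum_w: "(\<Sum>i<n. w i) = 1"
  shows "(\<Sum>i<n. (f i + (\<Sum>j<n. f j) * w i) powr q)
    \<le> 2 powr q * real n powr (q - 1) * (\<Sum>i<n. f i powr q)"
proof -
  define S where "S = (\<Sum>j<n. f j)"
  define F where "F = (\<Sum>i<n. f i powr q)"
  have S: "0 \<le> S" unfolding S_def by (rule sum_nonneg) (use f in auto)
  have F: "0 \<le> F" by (simp add: F_def sum_nonneg)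
  have "n \<noteq> 0" using sum_w by (intro notI) simp
  then have n: "1 \<le> real n powr (q - 1)" using q by (intro ge_one_powr_ge_zero) auto
  have "(f i + S * w i) powr q \<le> 2 powr (q - 1) * (f i powr q + S powr q * w i)" if i: "i < n" for i
  proof -
    have "w i \<le> (\<Sum>j<n. w j)" using i w by (intro member_le_sum) auto
    then have "w i powr q \<le> w i" using w[OF i] q sum_w powr_mono'[of 1 q "w i"] by simp
    then have Sw: "(S * w i) powr q \<le> S powr q * w i"
      using S w[OF i] by (simp add: powr_mult mult_left_mono)
    have "(f i + S * w i) powr q \<le> 2 powr (q - 1) * (f i powr q + (S * w i) powr q)"
      using powr_add_le_two_powr[OF q f[OF i], of "S * w i"] S w[OF i] by simp
    also have "\<dots> \<le> 2 powr (q - 1) * (f i powr q + S powr q * w i)"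
      using Sw by (intro mult_left_mono) auto
    finally show ?thesis .
  qed
  then have "(\<Sum>i<n. (f i + S * w i) powr q) \<le> (\<Sum>i<n. 2 powr (q - 1) * (f i powr q + S powr q * w i))"
    by (intro sum_mono) auto
  also have "\<dots> = 2 powr (q - 1) * (F + S powr q)"
    by (simp add: F_def sum.distrib sum_distrib_left[symmetric] sum_w)
  also have "\<dots> \<le> 2 powr (q - 1) * (real n powr (q - 1) * F + real n powr (q - 1) * F)"
    using powr_sum_le_card_sum_powr[OF q, of "{..<n}" f] f n F
    by (intro mult_left_mono add_mono) (auto simp: S_def F_def mult_le_cancel_right1)
  also have "\<dots> = 2 powr q * real n powr (q - 1) * F"
    by (simp add: powr_diff)
  finally show ?thesis by (simp add: S_def F_def)
qed

lemma cInf_le_mult_cInf: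
  fixes S T :: "real set"
  assumes "T \<noteq> {}" "bdd_below S" "0 < K" "\<And>t. t \<in> T \<Longrightarrow> \<exists>s\<in>S. s \<le> K * t"
  shows "Inf S \<le> K * Inf T"
proof -
  have "Inf S / K \<le> t" if t: "t \<in> T" for t
  proof -
    obtain s where "s \<in> S" "s \<le> K * t" using assms(4)[OF t] by blast
    then have "Inf S \<le> K * t" using assms(2) by (meson cInf_lower order.trans)
    then show ?thesis using assms(3) by (simp add: divide_le_eq mult.commute)
  qed
  then have "Inf S / K \<le> Inf T" using assms(1) by (intro cInf_greatest)
  then show ?thesis using assms(3) by (simp add: divide_le_eq mult.commute)
qed

definition pnorm :: "ereal \<Rightarrow> nat \<Rightarrow> (nat \<Rightarrow> real) \<Rightarrow> real" where
  "pnorm p n f =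
     (if p = \<infinity> then Max (insert 0 {\<bar>f i\<bar> | i. i < n})
      else (\<Sum>i<n. \<bar>f i\<bar> powr real_of_ereal p) powr (1 / real_of_ereal p))"

lemma pnorm_nonneg: "0 \<le> pnorm p n f"
  by (simp add: pnorm_def)

lemma pnorm_cong:
  assumes "\<And>i. i < n \<Longrightarrow> \<bar>f i\<bar> = \<bar>g i\<bar>"
  shows "pnorm p n f = pnorm p n g"
proof -
  have "{\<bar>f i\<bar> | i. i < n} = {\<bar>g i\<bar> | i. i < n}" using assms by force
  moreover have "(\<Sum>i<n. \<bar>f i\<bar> powr q) = (\<Sum>i<n. \<bar>g i\<bar> powr q)" for q
    using assms by (intro sum.cong) auto
  ultimately show ?thesis by (simp add: pnorm_def)
qed

lemma pnorm_mono:
  assumes "1 \<le> p" and le: "\<And>i. i < n \<Longrightarrow> \<bar>f i\<bar> \<le> \<bar>g i\<bar>"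
  shows "pnorm p n f \<le> pnorm p n g"
proof (cases "p = \<infinity>")
  case True
  have "\<bar>g i\<bar> \<le> Max (insert 0 {\<bar>g i\<bar> | i. i < n})" if "i < n" for i
    using that by (intro Max_ge) auto
  then have "x \<le> Max (insert 0 {\<bar>g i\<bar> | i. i < n})" if "x \<in> insert 0 {\<bar>f i\<bar> | i. i < n}" for x
    using that le by (force intro: Max_ge)
  then have "Max (insert 0 {\<bar>f i\<bar> | i. i < n}) \<le> Max (insert 0 {\<bar>g i\<bar> | i. i < n})"
    by (intro Max.boundedI) auto
  with True show ?thesis by (simp add: pnorm_def)
next
  case False
  then obtain q where q: "p = ereal q" "1 \<le> q" using assms(1) by (cases p) auto
  have "(\<Sum>i<n. \<bar>f i\<bar> powr q) \<le> (\<Sum>i<n. \<bar>g i\<bar> powr q)"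
    using le q by (intro sum_mono powr_mono2) auto
  then show ?thesis using q by (simp add: pnorm_def powr_mono2 sum_nonneg)
qed

lemma pnorm_mult:
  assumes "1 \<le> p" and "0 \<le> c"
  shows "pnorm p n (\<lambda>i. c * f i) = c * pnorm p n f"
proof (cases "p = \<infinity>")
  case True
  have "c * Max (insert 0 {\<bar>f i\<bar> | i. i < n}) = Max ((*) c ` insert 0 {\<bar>f i\<bar> | i. i < n})"
    using assms(2) by (intro mono_Max_commute) (auto simp: mono_def mult_left_mono)
  also have "(*) c ` insert 0 {\<bar>f i\<bar> | i. i < n} = insert 0 {\<bar>c * f i\<bar> | i. i < n}"
    using assms(2) by (auto simp: abs_mult)
  finally show ?thesis using True by (simp add: pnorm_def)
next
  case False
  then obtain q where q: "p = ereal q" "1 \<le> q" using assms(1) by (cases p) auto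
  have "(\<Sum>i<n. \<bar>c * f i\<bar> powr q) = c powr q * (\<Sum>i<n. \<bar>f i\<bar> powr q)"
    using assms(2) by (simp add: abs_mult powr_mult sum_distrib_left)
  moreover have "(c powr q * S) powr (1 / q) = c * S powr (1 / q)" if "0 \<le> S" for S
    using q assms(2) that by (simp add: powr_mult powr_powr)
  ultimately show ?thesis
    using q by (simp add: pnorm_def sum_nonneg)
qed

lemma pnorm_add_sum_weighted_le:
  fixes f w :: "nat \<Rightarrow> real"
  assumes p: "1 \<le> p" and f: "\<And>i. i < n \<Longrightarrow> 0 \<le> f i"
    and w: "\<And>i. i < n \<Longrightarrow> 0 \<le> w i" and sum_w: "(\<Sum>i<n. w i) = 1"
  shows "pnorm p n (\<lambda>i. f i + (\<Sum>j<n. f j) * w i) \<le> 2 * nexp p n * pnorm p n f"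
proof (cases "p = \<infinity>")
  case True
  define M where "M = Max (insert 0 {\<bar>f i\<bar> | i. i < n})"
  have fM: "f i \<le> M" if "i < n" for i
  proof -
    have "\<bar>f i\<bar> \<le> M" unfolding M_def using that by (intro Max_ge) auto
    then show ?thesis by simp
  qed
  have M: "0 \<le> M" by (simp add: M_def)
  have "n \<noteq> 0" using sum_w by (intro notI) simp
  then have "M \<le> real n * M" using M by (simp add: mult_le_cancel_right1)
  have sum_f: "0 \<le> (\<Sum>j<n. f j)" "(\<Sum>j<n. f j) \<le> real n * M"
    using f fM sum_mono[of "{..<n}" f "\<lambda>_. M"] by (auto intro: sum_nonneg)
  have "\<bar>f i + (\<Sum>j<n. f j) * w i\<bar> \<le> 2 * real n * M" if i: "i < n" for i
  proof -
    have "w i \<le> (\<Sum>j<n. w j)" using i w by (intro member_le_sum) auto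
    then have "(\<Sum>j<n. f j) * w i \<le> (\<Sum>j<n. f j)"
      using sum_f w[OF i] sum_w by (simp add: mult_right_le_one_le)
    then show ?thesis
      using fM[OF i] f[OF i] w[OF i] sum_f \<open>M \<le> real n * M\<close> by simp
  qed
  then have "Max (insert 0 {\<bar>f i + (\<Sum>j<n. f j) * w i\<bar> | i. i < n}) \<le> 2 * real n * M"
    using M by (auto intro!: Max.boundedI)
  then show ?thesis using True by (simp add: pnorm_def nexp_def M_def)
next
  case False
  then obtain q where q: "p = ereal q" "1 \<le> q" using p by (cases p) auto
  define F where "F = (\<Sum>i<n. f i powr q)"
  have F: "0 \<le> F" by (simp add: F_def sum_nonneg)
  have "0 \<le> (\<Sum>j<n. f j)" by (rule sum_nonneg) (use f in auto)
  then have "(\<Sum>i<n. \<bar>f i + (\<Sum>j<n. f j) * w i\<bar> powr q)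
      = (\<Sum>i<n. (f i + (\<Sum>j<n. f j) * w i) powr q)"
    using f w by (intro sum.cong) auto
  also have "\<dots> \<le> 2 powr q * real n powr (q - 1) * F"
    unfolding F_def by (rule sum_powr_add_sum_weighted_le[where f = f and w = w, OF q(2) f w sum_w])
  finally have "(\<Sum>i<n. \<bar>f i + (\<Sum>j<n. f j) * w i\<bar> powr q) powr (1 / q)
      \<le> (2 powr q * real n powr (q - 1) * F) powr (1 / q)"
    using q by (intro powr_mono2) (auto simp: sum_nonneg)
  also have "\<dots> = 2 * real n powr (1 - 1 / q) * F powr (1 / q)"
    using q F by (simp add: powr_mult powr_powr field_simps)
  finally show ?thesis
    using q f by (simp add: pnorm_def nexp_def F_def)
qed

lemma pnorm_normalized_diff_le:
  fixes u v :: "nat \<Rightarrow> real"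
  assumes p: "1 \<le> p" and u: "\<And>i. i < n \<Longrightarrow> 0 \<le> u i" and v: "\<And>i. i < n \<Longrightarrow> 0 \<le> v i"
    and U: "0 < (\<Sum>i<n. u i)" and V: "0 < (\<Sum>i<n. v i)"
  shows "pnorm p n (\<lambda>i. u i / (\<Sum>j<n. u j) - v i / (\<Sum>j<n. v j))
    \<le> 2 * nexp p n * pnorm p n (\<lambda>i. u i - v i) / max (\<Sum>i<n. u i) (\<Sum>i<n. v i)"
proof -
  define L where "L = max (\<Sum>i<n. u i) (\<Sum>i<n. v i)"
  define D where "D = (\<Sum>i<n. \<bar>u i - v i\<bar>)"
  define w where "w i = (if (\<Sum>j<n. v j) \<le> (\<Sum>j<n. u j) then v i / (\<Sum>j<n. v j) else u i / (\<Sum>j<n. u j))" for i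
  have L: "0 < L" using U by (simp add: L_def)
  have w: "0 \<le> w i" if "i < n" for i using u[OF that] v[OF that] U V by (simp add: w_def)
  have sum_w: "(\<Sum>i<n. w i) = 1"
    using U V by (cases "(\<Sum>j<n. v j) \<le> (\<Sum>j<n. u j)") (simp_all add: w_def sum_divide_distrib[symmetric])
  have "\<bar>(\<Sum>i<n. u i) - (\<Sum>i<n. v i)\<bar> \<le> D"
    unfolding D_def sum_subtractf[symmetric] by (rule sum_abs)
  then have pointwise: "\<bar>u i / (\<Sum>j<n. u j) - v i / (\<Sum>j<n. v j)\<bar> \<le> \<bar>(1 / L) * (\<bar>u i - v i\<bar> + D * w i)\<bar>"
    if i: "i < n" for i
    using abs_divide_diff_divide_le[of "\<Sum>j<n. v j" "\<Sum>j<n. u j" "v i" D "u i"]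
      abs_divide_diff_divide_le[of "\<Sum>j<n. u j" "\<Sum>j<n. v j" "u i" D "v i"]
      u[OF i] v[OF i] w[OF i] U V
    by (auto simp: L_def w_def abs_minus_commute D_def)
  have "pnorm p n (\<lambda>i. u i / (\<Sum>j<n. u j) - v i / (\<Sum>j<n. v j))
      \<le> pnorm p n (\<lambda>i. (1 / L) * (\<bar>u i - v i\<bar> + D * w i))"
    using pointwise by (rule pnorm_mono[OF p])
  also have "\<dots> = pnorm p n (\<lambda>i. \<bar>u i - v i\<bar> + D * w i) / L"
    using pnorm_mult[OF p, of "1 / L" n "\<lambda>i. \<bar>u i - v i\<bar> + D * w i"] L by simp
  also have "\<dots> \<le> 2 * nexp p n * pnorm p n (\<lambda>i. \<bar>u i - v i\<bar>) / L"
    using pnorm_add_sum_weighted_le[OF p, of n "\<lambda>i. \<bar>u i - v i\<bar>" w] w sum_w L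
    by (simp add: D_def divide_right_mono)
  also have "pnorm p n (\<lambda>i. \<bar>u i - v i\<bar>) = pnorm p n (\<lambda>i. u i - v i)"
    by (rule pnorm_cong) simp
  finally show ?thesis by (simp add: L_def)
qed

lemma icost_nonneg: "0 \<le> icost a b"
  by (simp add: icost_def)

lemma match_cost_eq_pnorm:
  "match_cost p xs ys = pnorm p (length xs) (\<lambda>i. icost (xs ! i) (ys ! i))"
  by (simp add: match_cost_def pnorm_def icost_nonneg)

lemma abs_length_diff_le_icost: "\<bar>(snd a - fst a) - (snd b - fst b)\<bar> \<le> 2 * icost a b"
  by (auto simp: icost_def max_def abs_if)

lemma padded_enum_exists:
  assumes "size A \<le> n"
  shows "\<exists>xs. padded_enum n A xs"
proof -
  obtain xs where xs: "mset xs = A" using ex_mset by blast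
  let ?pad = "replicate (n - size A) (0::real, 0::real)"
  have "length (xs @ ?pad) = n" using assms xs by (auto simp: size_mset[symmetric])
  moreover have "mset (xs @ ?pad) = A + mset ?pad" using xs by simp
  ultimately show ?thesis unfolding padded_enum_def by fastforce
qed

lemma padded_enum_psi:
  assumes "padded_enum n A xs"
  shows "padded_enum n (psi A) (map (\<lambda>q. (0, (snd q - fst q) / total_length A)) xs)"
proof -
  define f where "f = (\<lambda>q::real \<times> real. (0::real, (snd q - fst q) / total_length A))"
  obtain P where "length xs = n" "mset xs = A + P" "\<forall>q\<in>#P. fst q = snd q"
    using assms unfolding padded_enum_def by blast
  then have "length (map f xs) = n" "mset (map f xs) = psi A + image_mset f P"
    "\<forall>q\<in># image_mset f P. fst q = snd q"
    by (auto simp: psi_def f_def)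
  then show ?thesis unfolding padded_enum_def f_def by blast
qed

lemma padded_enum_fst_le_snd:
  assumes "padded_enum n A xs" "in_BF A" "i < n"
  shows "fst (xs ! i) \<le> snd (xs ! i)"
proof -
  obtain P where "length xs = n" "mset xs = A + P" "\<forall>q\<in>#P. fst q = snd q"
    using assms(1) unfolding padded_enum_def by blast
  moreover from this have "xs ! i \<in># A + P" using assms(3) by (metis nth_mem_mset)
  ultimately show ?thesis using assms(2) unfolding in_BF_def by fastforce
qed

lemma padded_enum_sum_lengths:
  assumes "padded_enum n A xs"
  shows "(\<Sum>i<n. snd (xs ! i) - fst (xs ! i)) = total_length A"
proof -
  define len where "len q = snd q - fst q" for q :: "real \<times> real"
  obtain P where P: "length xs = n" "mset xs = A + P" "\<forall>q\<in>#P. fst q = snd q"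
    using assms unfolding padded_enum_def by blast
  have "(\<Sum>i<n. len (xs ! i)) = sum_list (map len xs)"
    using P(1) by (simp add: sum_list_sum_nth atLeast0LessThan)
  also have "\<dots> = sum_mset (image_mset len A) + sum_mset (image_mset len P)"
    by (metis P(2) image_mset_union mset_map sum_mset.union sum_mset_sum_list)
  also have "sum_mset (image_mset len P) = 0"
    using P(3) by (intro sum_mset.neutral) (auto simp: len_def)
  finally show ?thesis by (simp add: total_length_def len_def)
qed

lemma match_cost_normalized_le:
  assumes p: "1 \<le> p" and "in_BF A" "in_BF B" "0 < total_length A" "0 < total_length B"
    and xs: "padded_enum n A xs" and ys: "padded_enum n B ys"
  shows "match_cost p (map (\<lambda>q. (0, (snd q - fst q) / total_length A)) xs)
                      (map (\<lambda>q. (0, (snd q - fst q) / total_length B)) ys)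
    \<le> 4 * nexp p n * match_cost p xs ys / L_max A B"
proof -
  define u where "u i = snd (xs ! i) - fst (xs ! i)" for i
  define v where "v i = snd (ys ! i) - fst (ys ! i)" for i
  have len: "length xs = n" "length ys = n" using xs ys by (simp_all add: padded_enum_def)
  have sums: "(\<Sum>i<n. u i) = total_length A" "(\<Sum>i<n. v i) = total_length B"
    using padded_enum_sum_lengths[OF xs] padded_enum_sum_lengths[OF ys] by (simp_all add: u_def v_def)
  have nonneg: "0 \<le> u i" "0 \<le> v i" if "i < n" for i
    using padded_enum_fst_le_snd[OF xs \<open>in_BF A\<close> that] padded_enum_fst_le_snd[OF ys \<open>in_BF B\<close> that]
    by (simp_all add: u_def v_def)
  have "match_cost p (map (\<lambda>q. (0, (snd q - fst q) / total_length A)) xs)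
                     (map (\<lambda>q. (0, (snd q - fst q) / total_length B)) ys)
      = pnorm p n (\<lambda>i. u i / (\<Sum>j<n. u j) - v i / (\<Sum>j<n. v j))"
    unfolding match_cost_eq_pnorm length_map len(1) sums
    by (rule pnorm_cong) (simp add: len u_def v_def icost_def)
  also have "\<dots> \<le> 2 * nexp p n * pnorm p n (\<lambda>i. u i - v i) / L_max A B"
    using pnorm_normalized_diff_le[OF p, of n u v] nonneg sums assms(4,5)
    by (simp add: L_max_def)
  also have "pnorm p n (\<lambda>i. u i - v i) \<le> pnorm p n (\<lambda>i. 2 * icost (xs ! i) (ys ! i))"
    by (intro pnorm_mono[OF p]) (simp add: u_def v_def abs_length_diff_le_icost icost_nonneg)
  also have "\<dots> = 2 * match_cost p xs ys"
    by (simp add: pnorm_mult[OF p] match_cost_eq_pnorm len)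
  finally show ?thesis
    using assms(4) by (simp add: L_max_def nexp_def divide_right_mono mult_left_mono)
qed

theorem lemma4:
  fixes p :: ereal and A B :: barcode
  assumes "1 \<le> p" and "in_BF A" and "in_BF B"
    and "total_length A > 0" and "total_length B > 0"
  shows "wdist p (psi A) (psi B) \<le> 4 * nexp p (n_max A B) * wdist p A B / L_max A B
       \<and> 4 * nexp p (n_max A B) * wdist p A B / L_max A B = 2 * rel_err p A B"
proof
  show "4 * nexp p (n_max A B) * wdist p A B / L_max A B = 2 * rel_err p A B"
    by (simp add: rel_err_def)
  define n where "n = n_max A B"
  define costs where
    "costs C D = {match_cost p xs ys | xs ys. padded_enum n C xs \<and> padded_enum n D ys}" for C D
  have "A \<noteq> {#}" using assms(4) by (auto simp: total_length_def)
  then have "0 < n" by (simp add: n_def n_max_def nonempty_has_size)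
  then have K: "0 < 4 * nexp p n / L_max A B"
    using assms(4) by (simp add: nexp_def L_max_def)
  have "Inf (costs (psi A) (psi B)) \<le> 4 * nexp p n / L_max A B * Inf (costs A B)"
  proof (rule cInf_le_mult_cInf[OF _ _ K])
    show "costs A B \<noteq> {}"
      using padded_enum_exists[of A n] padded_enum_exists[of B n] by (auto simp: costs_def n_def n_max_def)
    show "bdd_below (costs (psi A) (psi B))"
      by (rule bdd_belowI[of _ 0]) (auto simp: costs_def match_cost_eq_pnorm pnorm_nonneg)
    show "\<exists>s\<in>costs (psi A) (psi B). s \<le> 4 * nexp p n / L_max A B * t" if "t \<in> costs A B" for t
      using that padded_enum_psi match_cost_normalized_le[OF assms] by (fastforce simp: costs_def)
  qed
  moreover have "n_max (psi A) (psi B) = n" by (simp add: n_max_def psi_def n_def)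
  ultimately show "wdist p (psi A) (psi B) \<le> 4 * nexp p (n_max A B) * wdist p A B / L_max A B"
    by (simp add: wdist_def costs_def n_def)
qed

end
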